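(* The following quantifier-free set theories are all non-convex: $\mathsf{MLSS}$ ($\mathsf{MLS}$ extended with literals $x=\{y\}$), $\mathsf{MLSP}$ ($\mathsf{MLS}$ extended with literals $x=\mathcal{P}(y)$), $\mathsf{MLSSP}$ ($\mathsf{MLS}$ extended with both), $\mathsf{MLSU}$ ($\mathsf{MLS}$ extended with literals $x=\bigcup y$), $\mathsf{MLS}\times$ ($\mathsf{MLS}$ extended with the Cartesian product $y\times z$), $\mathsf{MLS}\otimes$ ($\mathsf{MLS}$ extended with the unordered Cartesian product $y\otimes z$), $\mathsf{BST}\times$ and $\mathsf{BST}\otimes$ (Boolean set theory $\mathsf{BST}$ extended with the Cartesian product, respectively the unordered Cartesian product).
   Context: $\mathsf{MLS}$ is the quantifier-free propositional closure of atoms $x=\varnothing$, $x=y$, $x\subseteq y$, $x\in y$, $x=y\setminus z$, $x=y\cup z$, $x=y\cap z$ over set variables. $\mathsf{BST}$ consists of conjunctions of literals of the forms $s=\varnothing$, $s\neq\varnothing$, $s\cap t=\varnothing$, $s\cap t\neq\varnothing$, $s\subseteq t$, $s\not\subseteq t$, $s=t$, $s\neq t$, where $s,t$ are terms built from set variables with $\cup,\cap,\setminus$ (no membership). Formulae are interpreted by set assignments (maps from finitely many set variables into the von Neumann universe) with the usual meanings; $\mathcal{P}$ is powerset, $\bigcup y$ is the union of the members of $y$, $\times$ is the Cartesian product of ordered pairs, and $y\otimes z=\{\{a,b\}\mid a\in y,\ b\in z\}$. A theory is convex if for every conjunction of its literals $\psi$ and every finite nonempty disjunction $\bigvee_i x_i=y_i$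 of equalities, whenever every set assignment satisfying $\psi$ satisfies the disjunction, some single disjunct $x_i=y_i$ is satisfied by every set assignment satisfying $\psi$. *)

theory Defs
  imports Main
begin

text \<open>A universe of sets is a type 'v with a membership map E (E a = the members of a).
  The models of these axioms are (up to isomorphism) the V_kappa, kappa inaccessible;
  the von Neumann universe itself cannot be constructed in HOL.\<close>

definition zf_universe :: "('v \<Rightarrow> 'v set) \<Rightarrow> bool" where
  "zf_universe E \<longleftrightarrow>
     inj E
   \<and> wf {(x, y). x \<in> E y}
   \<and> (\<forall>a b. \<exists>c. E c = {a, b})
   \<and> (\<forall>a. \<exists>c. E c = \<Union> (E ` E a))
   \<and> (\<forall>a. \<exists>c. E c = {x. E x \<subseteq> E a})
   \<and> (\<forall>a S. S \<subseteq> E a \<longrightarrow> (\<exists>c. E c = S))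
   \<and> (\<forall>a (f :: 'v \<Rightarrow> 'v). \<exists>c. E c = f ` E a)
   \<and> (\<exists>a. infinite (E a))"

definition mk :: "('v \<Rightarrow> 'v set) \<Rightarrow> 'v set \<Rightarrow> 'v" where
  "mk E S = (SOME c. E c = S)"

definition v_empty :: "('v \<Rightarrow> 'v set) \<Rightarrow> 'v" where
  "v_empty E = mk E {}"
definition v_un :: "('v \<Rightarrow> 'v set) \<Rightarrow> 'v \<Rightarrow> 'v \<Rightarrow> 'v" where
  "v_un E a b = mk E (E a \<union> E b)"
definition v_int :: "('v \<Rightarrow> 'v set) \<Rightarrow> 'v \<Rightarrow> 'v \<Rightarrow> 'v" where
  "v_int E a b = mk E (E a \<inter> E b)"
definition v_diff :: "('v \<Rightarrow> 'v set) \<Rightarrow> 'v \<Rightarrow> 'v \<Rightarrow> 'v" where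
  "v_diff E a b = mk E (E a - E b)"
definition v_sing :: "('v \<Rightarrow> 'v set) \<Rightarrow> 'v \<Rightarrow> 'v" where
  "v_sing E a = mk E {a}"
definition v_upair :: "('v \<Rightarrow> 'v set) \<Rightarrow> 'v \<Rightarrow> 'v \<Rightarrow> 'v" where
  "v_upair E a b = mk E {a, b}"
definition v_opair :: "('v \<Rightarrow> 'v set) \<Rightarrow> 'v \<Rightarrow> 'v \<Rightarrow> 'v" where
  "v_opair E a b = v_upair E (v_sing E a) (v_upair E a b)"
definition v_pow :: "('v \<Rightarrow> 'v set) \<Rightarrow> 'v \<Rightarrow> 'v" where
  "v_pow E a = mk E {x. E x \<subseteq> E a}"
definition v_bigun :: "('v \<Rightarrow> 'v set) \<Rightarrow> 'v \<Rightarrow> 'v" where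
  "v_bigun E a = mk E (\<Union> (E ` E a))"
definition v_prod :: "('v \<Rightarrow> 'v set) \<Rightarrow> 'v \<Rightarrow> 'v \<Rightarrow> 'v" where
  "v_prod E a b = mk E {v_opair E x y | x y. x \<in> E a \<and> y \<in> E b}"
definition v_uprod :: "('v \<Rightarrow> 'v set) \<Rightarrow> 'v \<Rightarrow> 'v \<Rightarrow> 'v" where
  "v_uprod E a b = mk E {v_upair E x y | x y. x \<in> E a \<and> y \<in> E b}"

datatype stm =
    Var nat | Emp | TUn stm stm | TInt stm stm | Diff stm stm
  | Sing stm | Pow stm | BigUn stm | Prod stm stm | UProd stm stm

datatype atom = Eq stm stm | Sub stm stm | Mem stm stm

datatype lit = Pos atom | Neg atom

fun ev :: "('v \<Rightarrow> 'v set) \<Rightarrow> (nat \<Rightarrow> 'v) \<Rightarrow> stm \<Rightarrow> 'v" where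
  "ev E M (Var x) = M x"
| "ev E M Emp = v_empty E"
| "ev E M (TUn s t) = v_un E (ev E M s) (ev E M t)"
| "ev E M (TInt s t) = v_int E (ev E M s) (ev E M t)"
| "ev E M (Diff s t) = v_diff E (ev E M s) (ev E M t)"
| "ev E M (Sing s) = v_sing E (ev E M s)"
| "ev E M (Pow s) = v_pow E (ev E M s)"
| "ev E M (BigUn s) = v_bigun E (ev E M s)"
| "ev E M (Prod s t) = v_prod E (ev E M s) (ev E M t)"
| "ev E M (UProd s t) = v_uprod E (ev E M s) (ev E M t)"

fun holds_atom :: "('v \<Rightarrow> 'v set) \<Rightarrow> (nat \<Rightarrow> 'v) \<Rightarrow> atom \<Rightarrow> bool" where
  "holds_atom E M (Eq s t) = (ev E M s = ev E M t)"
| "holds_atom E M (Sub s t) = (E (ev E M s) \<subseteq> E (ev E M t))"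
| "holds_atom E M (Mem s t) = (ev E M s \<in> E (ev E M t))"

fun holds_lit :: "('v \<Rightarrow> 'v set) \<Rightarrow> (nat \<Rightarrow> 'v) \<Rightarrow> lit \<Rightarrow> bool" where
  "holds_lit E M (Pos a) = holds_atom E M a"
| "holds_lit E M (Neg a) = (\<not> holds_atom E M a)"

definition sat :: "('v \<Rightarrow> 'v set) \<Rightarrow> (nat \<Rightarrow> 'v) \<Rightarrow> lit list \<Rightarrow> bool" where
  "sat E M \<psi> \<longleftrightarrow> (\<forall>l\<in>set \<psi>. holds_lit E M l)"

definition lits_of :: "atom set \<Rightarrow> lit set" where
  "lits_of A = Pos ` A \<union> Neg ` A"

definition mls_atoms :: "atom set" where
  "mls_atoms =
     {Eq (Var x) Emp | x. True}
   \<union> {Eq (Var x) (Var y) | x y. True}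
   \<union> {Sub (Var x) (Var y) | x y. True}
   \<union> {Mem (Var x) (Var y) | x y. True}
   \<union> {Eq (Var x) (Diff (Var y) (Var z)) | x y z. True}
   \<union> {Eq (Var x) (TUn (Var y) (Var z)) | x y z. True}
   \<union> {Eq (Var x) (TInt (Var y) (Var z)) | x y z. True}"

definition sing_atoms :: "atom set" where
  "sing_atoms = {Eq (Var x) (Sing (Var y)) | x y. True}"
definition pow_atoms :: "atom set" where
  "pow_atoms = {Eq (Var x) (Pow (Var y)) | x y. True}"
definition bigun_atoms :: "atom set" where
  "bigun_atoms = {Eq (Var x) (BigUn (Var y)) | x y. True}"
definition prod_atoms :: "atom set" where
  "prod_atoms = {Eq (Var x) (Prod (Var y) (Var z)) | x y z. True}"
definition uprod_atoms :: "atom set" where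
  "uprod_atoms = {Eq (Var x) (UProd (Var y) (Var z)) | x y z. True}"

definition MLSS :: "lit set" where "MLSS = lits_of (mls_atoms \<union> sing_atoms)"
definition MLSP :: "lit set" where "MLSP = lits_of (mls_atoms \<union> pow_atoms)"
definition MLSSP :: "lit set" where "MLSSP = lits_of (mls_atoms \<union> sing_atoms \<union> pow_atoms)"
definition MLSU :: "lit set" where "MLSU = lits_of (mls_atoms \<union> bigun_atoms)"
definition MLS_prod :: "lit set" where "MLS_prod = lits_of (mls_atoms \<union> prod_atoms)"
definition MLS_uprod :: "lit set" where "MLS_uprod = lits_of (mls_atoms \<union> uprod_atoms)"

fun bst_term :: "bool \<Rightarrow> bool \<Rightarrow> stm \<Rightarrow> bool" where
  "bst_term p u (Var x) = True"
| "bst_term p u (TUn s t) = (bst_term p u s \<and> bst_term p u t)"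
| "bst_term p u (TInt s t) = (bst_term p u s \<and> bst_term p u t)"
| "bst_term p u (Diff s t) = (bst_term p u s \<and> bst_term p u t)"
| "bst_term p u (Prod s t) = (p \<and> bst_term p u s \<and> bst_term p u t)"
| "bst_term p u (UProd s t) = (u \<and> bst_term p u s \<and> bst_term p u t)"
| "bst_term p u _ = False"

definition bst_atoms :: "(stm \<Rightarrow> bool) \<Rightarrow> atom set" where
  "bst_atoms T =
     {Eq s Emp | s. T s}
   \<union> {Eq (TInt s t) Emp | s t. T s \<and> T t}
   \<union> {Sub s t | s t. T s \<and> T t}
   \<union> {Eq s t | s t. T s \<and> T t}"

definition BST_prod :: "lit set" where "BST_prod = lits_of (bst_atoms (bst_term True False))"
definition BST_uprod :: "lit set" where "BST_uprod = lits_of (bst_atoms (bst_term False True))"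

definition convex :: "('v \<Rightarrow> 'v set) \<Rightarrow> lit set \<Rightarrow> bool" where
  "convex E T \<longleftrightarrow>
    (\<forall>\<psi> ds. set \<psi> \<subseteq> T \<longrightarrow> ds \<noteq> [] \<longrightarrow>
       (\<forall>M. sat E M \<psi> \<longrightarrow> (\<exists>(x, y)\<in>set ds. M x = M y)) \<longrightarrow>
       (\<exists>(x, y)\<in>set ds. \<forall>M. sat E M \<psi> \<longrightarrow> M x = M y))"

end

theory Submission
  imports Defs
begin

text \<open>Each of these theories can express a conjunction that forces a disjunction of two variable
  equalities without forcing either disjunct. If \<open>x\<^sub>0 = \<emptyset>\<close> and \<open>x\<^sub>2 = {\<emptyset>}\<close> (written as
  \<open>x\<^sub>2 = {x\<^sub>0}\<close>, as \<open>x\<^sub>2 = \<P>(x\<^sub>0)\<close>, or as \<open>\<Union>x\<^sub>2 = x\<^sub>0 \<and> x\<^sub>0 \<in> x\<^sub>2\<close>), then \<open>x\<^sub>3 \<subseteq> x\<^sub>2\<close> forces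
  \<open>x\<^sub>3 = x\<^sub>0 \<or> x\<^sub>3 = x\<^sub>2\<close>. If \<open>x\<^sub>0 = \<emptyset>\<close> and \<open>x\<^sub>1 \<times> x\<^sub>2 = \<emptyset>\<close> (or \<open>x\<^sub>1 \<otimes> x\<^sub>2 = \<emptyset>\<close>), then
  \<open>x\<^sub>1 = x\<^sub>0 \<or> x\<^sub>2 = x\<^sub>0\<close>. In both situations two assignments built from \<open>\<emptyset>\<close> and \<open>{\<emptyset>}\<close>
  refute the two disjuncts separately.\<close>

lemma E_mk: "\<exists>c. E c = S \<Longrightarrow> E (mk E S) = S"
  unfolding mk_def by (rule someI_ex)

lemma not_convexI:
  assumes "set \<psi> \<subseteq> T"
    and "\<And>M. sat E M \<psi> \<Longrightarrow> M a = M b \<or> M c = M d"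
    and "sat E M\<^sub>1 \<psi>" "M\<^sub>1 a \<noteq> M\<^sub>1 b" "sat E M\<^sub>2 \<psi>" "M\<^sub>2 c \<noteq> M\<^sub>2 d"
  shows "\<not> convex E T"
  unfolding convex_def not_all not_imp
  by (intro exI[of _ \<psi>] exI[of _ "[(a, b), (c, d)]"]) (use assms in auto)

lemma not_convex_mono: "\<not> convex E T \<Longrightarrow> T \<subseteq> T' \<Longrightarrow> \<not> convex E T'"
  unfolding convex_def by blast

locale set_universe =
  fixes E :: "'v \<Rightarrow> 'v set"
  assumes zf_universe: "zf_universe E"
begin

lemma E_inject: "E a = E b \<longleftrightarrow> a = b"
  using zf_universe unfolding zf_universe_def by (auto dest: injD)

lemma ex_E_eq_pair: "\<exists>c. E c = {a, b}"
  using zf_universe unfolding zf_universe_def by (elim conjE) blast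

lemma ex_E_eq_Union: "\<exists>c. E c = \<Union> (E ` E a)"
  using zf_universe unfolding zf_universe_def by (elim conjE) blast

lemma ex_E_eq_Pow: "\<exists>c. E c = {x. E x \<subseteq> E a}"
  using zf_universe unfolding zf_universe_def by (elim conjE) blast

lemma ex_E_eq_subset: "S \<subseteq> E a \<Longrightarrow> \<exists>c. E c = S"
  using zf_universe unfolding zf_universe_def by (elim conjE) blast

lemma E_v_empty [simp]: "E (v_empty E) = {}"
  unfolding v_empty_def by (rule E_mk, rule ex_E_eq_subset) simp

lemma E_v_upair [simp]: "E (v_upair E a b) = {a, b}"
  unfolding v_upair_def by (rule E_mk, rule ex_E_eq_pair)

lemma E_v_sing [simp]: "E (v_sing E a) = {a}"
  unfolding v_sing_def by (rule E_mk) (use ex_E_eq_pair[of a a] in simp)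

lemma E_v_pow [simp]: "E (v_pow E a) = {x. E x \<subseteq> E a}"
  unfolding v_pow_def by (rule E_mk, rule ex_E_eq_Pow)

lemma E_v_bigun [simp]: "E (v_bigun E a) = \<Union> (E ` E a)"
  unfolding v_bigun_def by (rule E_mk, rule ex_E_eq_Union)

lemma E_v_un [simp]: "E (v_un E a b) = E a \<union> E b"
proof -
  have "\<exists>c. E c = E a \<union> E b"
    using ex_E_eq_Union[of "v_upair E a b"] by simp
  then show ?thesis
    unfolding v_un_def by (rule E_mk)
qed

lemma E_v_prod [simp]: "E (v_prod E a b) = {v_opair E x y | x y. x \<in> E a \<and> y \<in> E b}"
proof -
  have "v_opair E x y \<in> E (v_pow E (v_pow E (v_un E a b)))" if "x \<in> E a" "y \<in> E b" for x y
    using that by (simp add: v_opair_def)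
  then have "\<exists>c. E c = {v_opair E x y | x y. x \<in> E a \<and> y \<in> E b}"
    by (intro ex_E_eq_subset) blast
  then show ?thesis
    unfolding v_prod_def by (rule E_mk)
qed

lemma E_v_uprod [simp]: "E (v_uprod E a b) = {v_upair E x y | x y. x \<in> E a \<and> y \<in> E b}"
proof -
  have "v_upair E x y \<in> E (v_pow E (v_un E a b))" if "x \<in> E a" "y \<in> E b" for x y
    using that by simp
  then have "\<exists>c. E c = {v_upair E x y | x y. x \<in> E a \<and> y \<in> E b}"
    by (intro ex_E_eq_subset) blast
  then show ?thesis
    unfolding v_uprod_def by (rule E_mk)
qed

lemma eq_v_empty_iff: "a = v_empty E \<longleftrightarrow> E a = {}"
  using E_inject E_v_empty by metis

lemma eq_v_sing_iff: "a = v_sing E b \<longleftrightarrow> E a = {b}"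
  using E_inject E_v_sing by metis

lemma v_pow_v_empty: "v_pow E (v_empty E) = v_sing E (v_empty E)"
  by (auto simp: E_inject[symmetric] eq_v_empty_iff)

lemma v_bigun_eq_v_empty_iff: "v_bigun E a = v_empty E \<longleftrightarrow> E a \<subseteq> {v_empty E}"
  by (auto simp: eq_v_empty_iff)

lemma v_prod_eq_v_empty_iff: "v_prod E a b = v_empty E \<longleftrightarrow> a = v_empty E \<or> b = v_empty E"
  by (auto simp: eq_v_empty_iff)

lemma v_uprod_eq_v_empty_iff: "v_uprod E a b = v_empty E \<longleftrightarrow> a = v_empty E \<or> b = v_empty E"
  by (auto simp: eq_v_empty_iff)

lemma v_sing_v_empty_neq: "v_sing E (v_empty E) \<noteq> v_empty E"
  by (simp add: eq_v_empty_iff)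

lemma not_convex_if_sat_iff_subset_singleton:
  assumes "set \<psi> \<subseteq> T"
    and sat_iff: "\<And>M. sat E M \<psi> \<longleftrightarrow> M 0 = v_empty E \<and> E (M 2) = {M 0} \<and> E (M 3) \<subseteq> E (M 2)"
  shows "\<not> convex E T"
proof -
  let ?e = "v_empty E" and ?n = "v_sing E (v_empty E)"
  show ?thesis
  proof (rule not_convexI[OF assms(1), where a = 3 and b = 0 and c = 3 and d = 2
        and ?M\<^sub>1 = "(\<lambda>_. ?e)(2 := ?n, 3 := ?n)" and ?M\<^sub>2 = "(\<lambda>_. ?e)(2 := ?n)"])
    show "M 3 = M 0 \<or> M 3 = M 2" if "sat E M \<psi>" for M
    proof -
      have "E (M 3) = E (M 0) \<or> E (M 3) = E (M 2)"
        using that by (auto simp: sat_iff subset_singleton_iff)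
      then show ?thesis by (simp add: E_inject)
    qed
  qed (use v_sing_v_empty_neq in \<open>simp_all add: sat_iff\<close>)
qed

lemma not_convex_if_sat_iff_empty_factor:
  assumes "set \<psi> \<subseteq> T"
    and sat_iff: "\<And>M. sat E M \<psi> \<longleftrightarrow> M 0 = v_empty E \<and> (M 1 = v_empty E \<or> M 2 = v_empty E)"
  shows "\<not> convex E T"
proof -
  let ?e = "v_empty E" and ?n = "v_sing E (v_empty E)"
  show ?thesis
  proof (rule not_convexI[OF assms(1), where a = 1 and b = 0 and c = 2 and d = 0
        and ?M\<^sub>1 = "(\<lambda>_. ?e)(1 := ?n)" and ?M\<^sub>2 = "(\<lambda>_. ?e)(2 := ?n)"])
    show "M 1 = M 0 \<or> M 2 = M 0" if "sat E M \<psi>" for M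
      using that by (auto simp: sat_iff)
  qed (use v_sing_v_empty_neq in \<open>simp_all add: sat_iff\<close>)
qed

lemma not_convex_MLSS: "\<not> convex E MLSS"
proof (rule not_convex_if_sat_iff_subset_singleton)
  let ?\<psi> = "[Pos (Eq (Var 0) Emp), Pos (Eq (Var 2) (Sing (Var 0))), Pos (Sub (Var 3) (Var 2))]"
  show "set ?\<psi> \<subseteq> MLSS"
    by (simp add: MLSS_def lits_of_def mls_atoms_def sing_atoms_def)
  show "sat E M ?\<psi> \<longleftrightarrow> M 0 = v_empty E \<and> E (M 2) = {M 0} \<and> E (M 3) \<subseteq> E (M 2)" for M
    by (auto simp: sat_def eq_v_sing_iff)
qed

lemma not_convex_MLSP: "\<not> convex E MLSP"
proof (rule not_convex_if_sat_iff_subset_singleton)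
  let ?\<psi> = "[Pos (Eq (Var 0) Emp), Pos (Eq (Var 2) (Pow (Var 0))), Pos (Sub (Var 3) (Var 2))]"
  show "set ?\<psi> \<subseteq> MLSP"
    by (simp add: MLSP_def lits_of_def mls_atoms_def pow_atoms_def)
  show "sat E M ?\<psi> \<longleftrightarrow> M 0 = v_empty E \<and> E (M 2) = {M 0} \<and> E (M 3) \<subseteq> E (M 2)" for M
    by (auto simp: sat_def v_pow_v_empty eq_v_sing_iff)
qed

lemma not_convex_MLSU: "\<not> convex E MLSU"
proof (rule not_convex_if_sat_iff_subset_singleton)
  let ?\<psi> = "[Pos (Eq (Var 0) Emp), Pos (Eq (Var 0) (BigUn (Var 2))), Pos (Mem (Var 0) (Var 2)),
     Pos (Sub (Var 3) (Var 2))]"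
  show "set ?\<psi> \<subseteq> MLSU"
    by (simp add: MLSU_def lits_of_def mls_atoms_def bigun_atoms_def)
  show "sat E M ?\<psi> \<longleftrightarrow> M 0 = v_empty E \<and> E (M 2) = {M 0} \<and> E (M 3) \<subseteq> E (M 2)" for M
    using v_bigun_eq_v_empty_iff[of "M 2"] by (auto simp: sat_def simp del: E_v_bigun)
qed

lemma not_convex_MLS_prod: "\<not> convex E MLS_prod"
  by (rule not_convex_if_sat_iff_empty_factor
      [of "[Pos (Eq (Var 0) Emp), Pos (Eq (Var 0) (Prod (Var 1) (Var 2)))]"])
    (auto simp: MLS_prod_def lits_of_def mls_atoms_def prod_atoms_def sat_def
      v_prod_eq_v_empty_iff[symmetric] simp del: E_v_prod)

lemma not_convex_MLS_uprod: "\<not> convex E MLS_uprod"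
  by (rule not_convex_if_sat_iff_empty_factor
      [of "[Pos (Eq (Var 0) Emp), Pos (Eq (Var 0) (UProd (Var 1) (Var 2)))]"])
    (auto simp: MLS_uprod_def lits_of_def mls_atoms_def uprod_atoms_def sat_def
      v_uprod_eq_v_empty_iff[symmetric] simp del: E_v_uprod)

lemma not_convex_BST_prod: "\<not> convex E BST_prod"
  by (rule not_convex_if_sat_iff_empty_factor
      [of "[Pos (Eq (Var 0) Emp), Pos (Eq (Prod (Var 1) (Var 2)) Emp)]"])
    (auto simp: BST_prod_def lits_of_def bst_atoms_def sat_def
      v_prod_eq_v_empty_iff simp del: E_v_prod)

lemma not_convex_BST_uprod: "\<not> convex E BST_uprod"
  by (rule not_convex_if_sat_iff_empty_factor
      [of "[Pos (Eq (Var 0) Emp), Pos (Eq (UProd (Var 1) (Var 2)) Emp)]"])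
    (auto simp: BST_uprod_def lits_of_def bst_atoms_def sat_def
      v_uprod_eq_v_empty_iff simp del: E_v_uprod)

end

theorem lemma14:
  fixes E :: "'v \<Rightarrow> 'v set"
  assumes "zf_universe E"
  shows "\<not> convex E MLSS \<and> \<not> convex E MLSP \<and> \<not> convex E MLSSP \<and> \<not> convex E MLSU
       \<and> \<not> convex E MLS_prod \<and> \<not> convex E MLS_uprod
       \<and> \<not> convex E BST_prod \<and> \<not> convex E BST_uprod"
proof -
  interpret set_universe E
    by (rule set_universe.intro) (fact assms)
  have "MLSS \<subseteq> MLSSP"
    unfolding MLSS_def MLSSP_def lits_of_def by blast
  then have "\<not> convex E MLSSP"
    using not_convex_MLSS by (rule not_convex_mono[rotated])
  then show ?thesis
    using not_convex_MLSS not_convex_MLSP not_convex_MLSU not_convex_MLS_prod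
      not_convex_MLS_uprod not_convex_BST_prod not_convex_BST_uprod
    by blast
qed

end
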